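(* For all $c,d\in\Lambda_1(\mathbb{Q}\mathrm{Par})\subset\mathbb{Q}[x_i;i\ge1]$ we have $[c,d]=\varepsilon(c)(d)-\varepsilon(d)(c)$ in $\Lambda_1(\mathbb{Q}\mathrm{Par})\subset\mathbb{Q}[x_i;i\ge1]$.
   Context: The nonsymmetric operad of partitions $\mathrm{Par}$: $\mathrm{Par}((1))=\{1\}$, and for $m\ge2$, $\mathrm{Par}((m))$ is the set of monomials $\prod_{i=1}^Nx_i^{a_i}$ in $\mathbb{Q}[x_i;i\ge1]$ with $N\ge2$, all $a_i\ge1$, $\sum a_i=m$. Partial composition: if $a_1+\dots+a_{l-1}+1\le s\le a_1+\dots+a_l$, then $\left(\prod_{i=1}^Nx_i^{a_i}\right)\circ_s\left(\prod_{k=1}^{N_s}x_k^{b_k}\right)=x_l^{a_l-1+\sum_kb_k}\prod_{i\ne l}x_i^{a_i}$; $1$ is a two-sided unit. $\Lambda(\mathbb{Q}\mathrm{Par})=\bigoplus_{m\ge1}\mathbb{Q}\mathrm{Par}((m))$ with Lie bracket $[c,d]=\sum_{t=1}^{j}d\circ_tc-\sum_{s=1}^{k}c\circ_sd$ for $c\in\mathrm{Par}((k))$, $d\in\mathrm{Par}((j))$; $\Lambda_1(\mathbb{Q}\mathrm{Par})=\bigoplus_{m\ge2}\mathbb{Q}\mathrm{Par}((m))$, viewed as a subspace of $\mathbb{Q}[x_i;i\ge1]$. Let $L_0=x\mathbb{Q}[x]\frac{d}{dx}$. The augmentation $\varepsilon:\Lambda(\mathbb{Q}\mathrm{Par})\to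 L_0$ is the linear map sending each basis element of $\mathrm{Par}((m))$ to $x^m\frac{d}{dx}$. $L_0$ acts on $\mathbb{Q}[x_i;i\ge1]$ diagonally: $\left(\xi(x)\frac{d}{dx}\right)(f)=\sum_{i\ge1}\xi(x_i)\frac{\partial f}{\partial x_i}$. *)

theory Defs
  imports "HOL-Library.Poly_Mapping" "HOL-Computational_Algebra.Polynomial"
begin

text \<open>Polynomials in Q[x_i; i >= 1]: finitely supported maps from monomials
  (exponent vectors, nat =>0 nat, variable x_i is key i) to rational coefficients.\<close>

type_synonym monom = "nat \<Rightarrow>\<^sub>0 nat"
type_synonym mpoly = "monom \<Rightarrow>\<^sub>0 rat"

definition mdeg :: "monom \<Rightarrow> nat" where
  "mdeg a = (\<Sum>i\<in>Poly_Mapping.keys a. Poly_Mapping.lookup a i)"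

definition Par :: "nat \<Rightarrow> monom set" where
  "Par m = {a. \<exists>N\<ge>2. Poly_Mapping.keys a = {1..N} \<and> (\<forall>i\<in>{1..N}. Poly_Mapping.lookup a i \<ge> 1)
                  \<and> (\<Sum>i=1..N. Poly_Mapping.lookup a i) = m}"

text \<open>Basis element of QPar as a polynomial (the monomial with coefficient 1).\<close>
definition mon :: "monom \<Rightarrow> mpoly" where
  "mon a = Poly_Mapping.single a 1"

definition smul :: "rat \<Rightarrow> mpoly \<Rightarrow> mpoly" where
  "smul r p = Poly_Mapping.map (\<lambda>x. r * x) p"

definition psum :: "monom \<Rightarrow> nat \<Rightarrow> nat" where
  "psum a l = (\<Sum>i=1..l. Poly_Mapping.lookup a i)"

definition comp_idx :: "monom \<Rightarrow> nat \<Rightarrow> nat" where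
  "comp_idx a s = (THE l. 1 \<le> l \<and> psum a (l - 1) + 1 \<le> s \<and> s \<le> psum a l)"

definition pcomp :: "monom \<Rightarrow> nat \<Rightarrow> monom \<Rightarrow> monom" where
  "pcomp a s b = a + Poly_Mapping.single (comp_idx a s) (mdeg b - 1)"

definition brB :: "monom \<Rightarrow> monom \<Rightarrow> mpoly" where
  "brB c d = (\<Sum>t=1..mdeg d. mon (pcomp d t c)) - (\<Sum>s=1..mdeg c. mon (pcomp c s d))"

definition lie :: "mpoly \<Rightarrow> mpoly \<Rightarrow> mpoly" where
  "lie c d = (\<Sum>a\<in>Poly_Mapping.keys c. \<Sum>b\<in>Poly_Mapping.keys d. smul (Poly_Mapping.lookup c a * Poly_Mapping.lookup d b) (brB a b))"

definition Lambda1 :: "mpoly set" where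
  "Lambda1 = {c. \<forall>a\<in>Poly_Mapping.keys c. \<exists>m\<ge>2. a \<in> Par m}"

text \<open>Elements xi(x) d/dx of L_0 are represented by the univariate polynomial xi.
  The augmentation sends a basis element of Par((m)) to x^m d/dx.\<close>
definition eps :: "mpoly \<Rightarrow> rat poly" where
  "eps c = (\<Sum>a\<in>Poly_Mapping.keys c. monom (Poly_Mapping.lookup c a) (mdeg a))"

definition Var :: "nat \<Rightarrow> mpoly" where
  "Var i = Poly_Mapping.single (Poly_Mapping.single i 1) 1"

definition Const :: "rat \<Rightarrow> mpoly" where
  "Const r = Poly_Mapping.single 0 r"

definition subst_var :: "rat poly \<Rightarrow> nat \<Rightarrow> mpoly" where
  "subst_var xi i = (\<Sum>n\<le>degree xi. Const (coeff xi n) * Var i ^ n)"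

definition pder :: "nat \<Rightarrow> mpoly \<Rightarrow> mpoly" where
  "pder i f = (\<Sum>b\<in>Poly_Mapping.keys f. Poly_Mapping.single (b - Poly_Mapping.single i 1)
                                (Poly_Mapping.lookup f b * of_nat (Poly_Mapping.lookup b i)))"

definition vars :: "mpoly \<Rightarrow> nat set" where
  "vars f = \<Union> (Poly_Mapping.keys ` Poly_Mapping.keys f)"

text \<open>Diagonal action (xi(x) d/dx)(f) = sum_i xi(x_i) df/dx_i; only the finitely many
  variables occurring in f contribute.\<close>
definition act :: "rat poly \<Rightarrow> mpoly \<Rightarrow> mpoly" where
  "act xi f = (\<Sum>i\<in>vars f. subst_var xi i * pder i f)"

end

theory Submission
  imports Defs
begin

text \<open>Both sides are bilinear, so it suffices to compare them on basis monomials \<open>a \<in> Par((k))\<close>,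
  \<open>b \<in> Par((j))\<close>. As \<open>t\<close> runs through \<open>1..j\<close>, the index \<open>l\<close> with
  \<open>b \<circ>\<^sub>t a = x\<^sub>l\<^bsup>k-1\<^esup> x\<^sup>b\<close> stays constant on consecutive blocks of length \<open>b\<^sub>l\<close>; hence
  \<open>\<Sum>\<^sub>t b \<circ>\<^sub>t a = \<Sum>\<^sub>l b\<^sub>l x\<^sub>l\<^bsup>k-1\<^esup> x\<^sup>b = (x\<^sup>k d/dx)(x\<^sup>b) = \<epsilon>(a)(b)\<close>.\<close>

abbreviation e :: "nat \<Rightarrow> nat \<Rightarrow> monom" where
  "e i n \<equiv> Poly_Mapping.single i n"

definition act_pow_mon :: "nat \<Rightarrow> monom \<Rightarrow> mpoly" where
  "act_pow_mon n b =
     (\<Sum>i\<in>Poly_Mapping.keys b. Poly_Mapping.single (b + e i (n - 1)) (of_nat (Poly_Mapping.lookup b i)))"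

lemma smul_eq_Const_mult: "smul r p = Const r * p"
  by (simp add: smul_def Const_def mult_map_scale_conv_mult)

lemma Const_mult_single: "Const r * Poly_Mapping.single a s = Poly_Mapping.single a (r * s)"
  by (simp add: Const_def mult_single)

lemma Var_power: "Var i ^ n = Poly_Mapping.single (e i n) 1"
proof (induction n)
  case 0
  then show ?case by (simp add: one_poly_mapping_def single.abs_eq when_def)
next
  case (Suc n)
  then show ?case by (simp add: Var_def mult_single flip: single_add)
qed

lemma subst_var_monom: "subst_var (monom r m) i = Poly_Mapping.single (e i m) r"
proof (cases "r = 0")
  case True
  then show ?thesis by (simp add: subst_var_def Const_def)
next
  case False
  then have "subst_var (monom r m) i = (\<Sum>n\<le>m. Const (coeff (monom r m) n) * Var i ^ n)"
    by (simp add: subst_var_def degree_monom_eq)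
  also have "\<dots> = (\<Sum>n\<in>{m}. Const (coeff (monom r m) n) * Var i ^ n)"
    by (rule sum.mono_neutral_right) (auto simp: coeff_monom Const_def)
  also have "\<dots> = Poly_Mapping.single (e i m) r"
    by (simp add: Var_power Const_mult_single)
  finally show ?thesis .
qed

lemma subst_var_eq_sum_atMost:
  "degree xi \<le> N \<Longrightarrow> subst_var xi i = (\<Sum>n\<le>N. Const (coeff xi n) * Var i ^ n)"
  unfolding subst_var_def
  by (rule sum.mono_neutral_left) (auto simp: coeff_eq_0 Const_def)

lemma subst_var_add: "subst_var (p + q) i = subst_var p i + subst_var q i"
proof -
  define N where "N = max (degree p) (degree q)"
  have "degree (p + q) \<le> N"
    by (simp add: N_def degree_add_le)
  then show ?thesis
    by (simp add: subst_var_eq_sum_atMost[of _ N] N_def Const_def single_add distrib_right sum.distrib)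
qed

lemma subst_var_0: "subst_var 0 i = 0"
  by (simp add: subst_var_def Const_def)

lemma subst_var_sum:
  "finite A \<Longrightarrow> subst_var (\<Sum>a\<in>A. f a) i = (\<Sum>a\<in>A. subst_var (f a) i)"
  by (induction A rule: finite_induct) (simp_all add: subst_var_0 subst_var_add)

lemma subst_var_eps:
  "subst_var (eps c) i = (\<Sum>a\<in>Poly_Mapping.keys c. Poly_Mapping.single (e i (mdeg a)) (Poly_Mapping.lookup c a))"
  by (simp add: eps_def subst_var_sum subst_var_monom)

lemma pder_eq_0_if_notin_vars: "i \<notin> vars f \<Longrightarrow> pder i f = 0"
  unfolding pder_def vars_def
  by (rule sum.neutral) (auto simp: in_keys_iff)

lemma act_eq_sum_superset:
  assumes "finite V" "vars f \<subseteq> V"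
  shows "act xi f = (\<Sum>i\<in>V. subst_var xi i * pder i f)"
  unfolding act_def
  by (rule sum.mono_neutral_left) (use assms in \<open>auto simp: pder_eq_0_if_notin_vars\<close>)

lemma single_add_diff_single:
  assumes "Poly_Mapping.lookup b i \<ge> 1" "m \<ge> 1"
  shows "e i m + (b - e i 1) = b + e i (m - 1)"
  by (rule poly_mapping_eqI) (use assms in \<open>auto simp: lookup_add lookup_minus lookup_single when_def\<close>)

lemma sum_vars_single_eq_act_pow_mon:
  assumes "finite V" "Poly_Mapping.keys b \<subseteq> V" "n \<ge> 1"
  shows "(\<Sum>i\<in>V. Poly_Mapping.single (e i n + (b - e i 1)) (r * of_nat (Poly_Mapping.lookup b i)))
       = smul r (act_pow_mon n b)"
proof -
  have "(\<Sum>i\<in>V. Poly_Mapping.single (e i n + (b - e i 1)) (r * of_nat (Poly_Mapping.lookup b i)))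
      = (\<Sum>i\<in>Poly_Mapping.keys b. Poly_Mapping.single (e i n + (b - e i 1)) (r * of_nat (Poly_Mapping.lookup b i)))"
    by (rule sum.mono_neutral_right) (use assms in \<open>auto simp: in_keys_iff\<close>)
  also have "\<dots> = (\<Sum>i\<in>Poly_Mapping.keys b. Poly_Mapping.single (b + e i (n - 1)) (r * of_nat (Poly_Mapping.lookup b i)))"
    by (intro sum.cong refl arg_cong2[where f = Poly_Mapping.single] single_add_diff_single)
       (use assms in \<open>auto simp: in_keys_iff\<close>)
  also have "\<dots> = smul r (act_pow_mon n b)"
    by (simp add: act_pow_mon_def smul_eq_Const_mult sum_distrib_left Const_mult_single)
  finally show ?thesis .
qed

lemma act_eps:
  assumes "\<And>a. a \<in> Poly_Mapping.keys c \<Longrightarrow> mdeg a \<ge> 1"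
  shows "act (eps c) d = (\<Sum>a\<in>Poly_Mapping.keys c. \<Sum>b\<in>Poly_Mapping.keys d.
            smul (Poly_Mapping.lookup c a * Poly_Mapping.lookup d b) (act_pow_mon (mdeg a) b))"
proof -
  have "act (eps c) d = (\<Sum>i\<in>vars d. subst_var (eps c) i * pder i d)"
    by (rule act_eq_sum_superset) (auto simp: vars_def)
  also have "\<dots> = (\<Sum>i\<in>vars d. \<Sum>a\<in>Poly_Mapping.keys c. \<Sum>b\<in>Poly_Mapping.keys d.
      Poly_Mapping.single (e i (mdeg a) + (b - e i 1))
        (Poly_Mapping.lookup c a * (Poly_Mapping.lookup d b * of_nat (Poly_Mapping.lookup b i))))"
    by (simp only: subst_var_eps pder_def sum_product mult_single)
  also have "\<dots> = (\<Sum>a\<in>Poly_Mapping.keys c. \<Sum>b\<in>Poly_Mapping.keys d. \<Sum>i\<in>vars d.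
      Poly_Mapping.single (e i (mdeg a) + (b - e i 1))
        ((Poly_Mapping.lookup c a * Poly_Mapping.lookup d b) * of_nat (Poly_Mapping.lookup b i)))"
    by (simp add: sum.swap[of _ "vars d"] sum.swap[of _ "vars d" "Poly_Mapping.keys d"] mult.assoc)
  also have "\<dots> = (\<Sum>a\<in>Poly_Mapping.keys c. \<Sum>b\<in>Poly_Mapping.keys d.
            smul (Poly_Mapping.lookup c a * Poly_Mapping.lookup d b) (act_pow_mon (mdeg a) b))"
    by (intro sum.cong refl sum_vars_single_eq_act_pow_mon) (auto simp: vars_def dest: assms)
  finally show ?thesis .
qed

lemma psum_mono: "l \<le> l' \<Longrightarrow> psum b l \<le> psum b l'"
  unfolding psum_def by (rule sum_mono2) auto

lemma psum_Suc: "psum b (Suc l) = psum b l + Poly_Mapping.lookup b (Suc l)"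
  by (simp add: psum_def)

lemma comp_idx_eq:
  assumes "1 \<le> l" "psum b (l - 1) + 1 \<le> t" "t \<le> psum b l"
  shows "comp_idx b t = l"
  unfolding comp_idx_def
proof (rule the_equality)
  show "1 \<le> l \<and> psum b (l - 1) + 1 \<le> t \<and> t \<le> psum b l"
    using assms by auto
next
  fix l' assume l': "1 \<le> l' \<and> psum b (l' - 1) + 1 \<le> t \<and> t \<le> psum b l'"
  have False if "l' < l"
    using psum_mono[of l' "l - 1" b] that l' assms by linarith
  moreover have False if "l < l'"
    using psum_mono[of l "l' - 1" b] that l' assms by linarith
  ultimately show "l' = l"
    using linorder_neqE_nat by blast
qed

lemma sum_pcomp_psum:
  "(\<Sum>t=1..psum b L. mon (pcomp b t a))
     = (\<Sum>l=1..L. Poly_Mapping.single (b + e l (mdeg a - 1)) (of_nat (Poly_Mapping.lookup b l)))"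
proof (induction L)
  case 0
  then show ?case by (simp add: psum_def)
next
  case (Suc L)
  let ?block = "{psum b L + 1..psum b L + Poly_Mapping.lookup b (Suc L)}"
  have "comp_idx b t = Suc L" if "t \<in> ?block" for t
    using that by (intro comp_idx_eq) (auto simp: psum_Suc)
  then have "(\<Sum>t\<in>?block. mon (pcomp b t a)) = (\<Sum>t\<in>?block. mon (b + e (Suc L) (mdeg a - 1)))"
    by (simp add: pcomp_def)
  also have "\<dots> = Poly_Mapping.single (b + e (Suc L) (mdeg a - 1)) (of_nat (Poly_Mapping.lookup b (Suc L)))"
    by (simp add: mon_def mult_single flip: single_of_nat)
  finally have block: "(\<Sum>t\<in>?block. mon (pcomp b t a))
      = Poly_Mapping.single (b + e (Suc L) (mdeg a - 1)) (of_nat (Poly_Mapping.lookup b (Suc L)))" .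
  have "(\<Sum>t=1..psum b (Suc L). mon (pcomp b t a))
      = (\<Sum>t=1..psum b L. mon (pcomp b t a)) + (\<Sum>t\<in>?block. mon (pcomp b t a))"
    unfolding psum_Suc by (rule sum.ub_add_nat) simp
  then show ?case
    using Suc.IH block by simp
qed

lemma sum_pcomp_eq_act_pow_mon:
  assumes "0 \<notin> Poly_Mapping.keys b"
  shows "(\<Sum>t=1..mdeg b. mon (pcomp b t a)) = act_pow_mon (mdeg a) b"
proof -
  define N where "N = Max (insert 0 (Poly_Mapping.keys b))"
  have keys: "Poly_Mapping.keys b \<subseteq> {1..N}"
    using assms by (auto simp: N_def Suc_le_eq intro: Nat.gr0I)
  have "mdeg b = psum b N"
    unfolding mdeg_def psum_def
    by (rule sum.mono_neutral_left) (use keys in \<open>auto simp: in_keys_iff\<close>)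
  also have "act_pow_mon (mdeg a) b
      = (\<Sum>l=1..N. Poly_Mapping.single (b + e l (mdeg a - 1)) (of_nat (Poly_Mapping.lookup b l)))"
    unfolding act_pow_mon_def
    by (rule sum.mono_neutral_left) (use keys in \<open>auto simp: in_keys_iff\<close>)
  ultimately show ?thesis
    using sum_pcomp_psum[where b = b and L = N and a = a] by simp
qed

lemma brB_eq_act_pow_mon_diff:
  assumes "0 \<notin> Poly_Mapping.keys a" "0 \<notin> Poly_Mapping.keys b"
  shows "brB a b = act_pow_mon (mdeg a) b - act_pow_mon (mdeg b) a"
  unfolding brB_def sum_pcomp_eq_act_pow_mon[OF assms(1)] sum_pcomp_eq_act_pow_mon[OF assms(2)] ..

lemma Par_mdeg: "a \<in> Par m \<Longrightarrow> mdeg a = m"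
  by (auto simp: Par_def mdeg_def)

lemma Par_keys: "a \<in> Par m \<Longrightarrow> 0 \<notin> Poly_Mapping.keys a"
  by (auto simp: Par_def)

lemma Lambda1_keys:
  assumes "c \<in> Lambda1" "a \<in> Poly_Mapping.keys c"
  shows "mdeg a \<ge> 1" "0 \<notin> Poly_Mapping.keys a"
  using assms Par_mdeg Par_keys by (fastforce simp: Lambda1_def)+

theorem lemma4p1:
  fixes c d :: mpoly
  assumes "c \<in> Lambda1" and "d \<in> Lambda1"
  shows "lie c d = act (eps c) d - act (eps d) c"
proof -
  have "lie c d = (\<Sum>a\<in>Poly_Mapping.keys c. \<Sum>b\<in>Poly_Mapping.keys d.
      smul (Poly_Mapping.lookup c a * Poly_Mapping.lookup d b) (act_pow_mon (mdeg a) b) -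
      smul (Poly_Mapping.lookup d b * Poly_Mapping.lookup c a) (act_pow_mon (mdeg b) a))"
    unfolding lie_def
  proof (intro sum.cong refl)
    fix a b assume "a \<in> Poly_Mapping.keys c" "b \<in> Poly_Mapping.keys d"
    then have "brB a b = act_pow_mon (mdeg a) b - act_pow_mon (mdeg b) a"
      using assms by (intro brB_eq_act_pow_mon_diff Lambda1_keys(2))
    then show "smul (Poly_Mapping.lookup c a * Poly_Mapping.lookup d b) (brB a b) =
      smul (Poly_Mapping.lookup c a * Poly_Mapping.lookup d b) (act_pow_mon (mdeg a) b) -
      smul (Poly_Mapping.lookup d b * Poly_Mapping.lookup c a) (act_pow_mon (mdeg b) a)"
      by (simp add: smul_eq_Const_mult right_diff_distrib mult.commute)
  qed
  also have "\<dots> = act (eps c) d - act (eps d) c"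
    using act_eps[of c d] act_eps[of d c] Lambda1_keys(1) assms
    by (simp add: sum_subtractf sum.swap[of _ "Poly_Mapping.keys d"])
  finally show ?thesis .
qed

end
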